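(* Let $f$ be the harmonic function on $K$ with $f(p_0)=\alpha$, $f(p_1)=\beta$, $f(p_2)=\gamma$. Then the restriction of $f$ to the edge $[p_1,p_2]$, viewed as a function on $[0,1]$, is strictly increasing if and only if $\beta<\gamma$ and $2\beta-\gamma\le\alpha\le2\gamma-\beta$. Equivalently, for nonconstant $f$, the restriction is strictly monotone if and only if $(3\beta-\delta)(3\gamma-\delta)\le0$, where $\delta=\alpha+\beta+\gamma$.
   Context: Let $p_0,p_1,p_2$ be the vertices of a unit equilateral triangle in $\mathbb{R}^2$, $F_i(x)=(x+p_i)/2$, and $K$ the Sierpinski gasket (the attractor of $F_0,F_1,F_2$). Minimal triangles of the graph $G_m$ are the triangles with vertices $F_w(p_0),F_w(p_1),F_w(p_2)$ for words $w$ of length $m$ ($F_w$ the corresponding composition). A continuous $f:K\to\mathbb{R}$ is harmonic if for every $m\ge0$ and every minimal triangle of $G_m$ with vertices $v_i,v_j,v_k$, the value at the midpoint $v_{ij}$ of $[v_i,v_j]$ is $\frac15(2f(v_i)+2f(v_j)+f(v_k))$; such $f$ is uniquely determined by $(f(p_0),f(p_1),f(p_2))$. The edge $[p_1,p_2]$ is identified with $[0,1]$ via $t\mapsto p_1+t(p_2-p_1)$. *)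

theory Defs
  imports "HOL-Analysis.Analysis"
begin

text \<open>We model the plane R^2 by the complex numbers. The unit equilateral triangle
  is placed with p1 = 0, p2 = 1 and p0 = 1/2 + i sqrt 3 / 2.\<close>

definition SG_p :: "nat \<Rightarrow> complex" where
  "SG_p i = (if i = 0 then Complex (1/2) (sqrt 3 / 2) else if i = 1 then 0 else 1)"

definition SG_F :: "nat \<Rightarrow> complex \<Rightarrow> complex" where
  "SG_F i x = (x + SG_p i) / 2"

definition SG_Fw :: "nat list \<Rightarrow> complex \<Rightarrow> complex" where
  "SG_Fw w = foldr (\<lambda>i g. SG_F i \<circ> g) w id"

definition SG_K :: "complex set" where
  "SG_K = (THE K. compact K \<and> K \<noteq> {} \<and> K = (\<Union>i\<in>{0,1,2}. SG_F i ` K))"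

definition SG_harmonic :: "(complex \<Rightarrow> real) \<Rightarrow> bool" where
  "SG_harmonic f \<longleftrightarrow> continuous_on SG_K f \<and>
     (\<forall>w i j k. set w \<subseteq> {0,1,2} \<and> {i,j,k} = {0,1,2::nat} \<longrightarrow>
        f ((SG_Fw w (SG_p i) + SG_Fw w (SG_p j)) / 2) =
          (2 * f (SG_Fw w (SG_p i)) + 2 * f (SG_Fw w (SG_p j)) + f (SG_Fw w (SG_p k))) / 5)"

definition SG_edge :: "(complex \<Rightarrow> real) \<Rightarrow> real \<Rightarrow> real" where
  "SG_edge f t = f (SG_p 1 + complex_of_real t * (SG_p 2 - SG_p 1))"

end

theory Submission
  imports Defs
begin

text \<open>
  A harmonic function is determined on each cell \<open>F\<^sub>w(K)\<close> by its values at the three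
  corners, and passing from \<open>F\<^sub>w(K)\<close> to \<open>F\<^sub>w\<^sub>i(K)\<close> transforms these values by the harmonic
  extension matrix \<open>A\<^sub>i\<close>. The edge \<open>[p\<^sub>1, p\<^sub>2]\<close> is tiled by the cells with words over
  \<open>{1, 2}\<close>, and the condition \<open>\<beta> < \<gamma>, 2\<beta> - \<gamma> \<le> \<alpha> \<le> 2\<gamma> - \<beta>\<close> is preserved by \<open>A\<^sub>1\<close> and \<open>A\<^sub>2\<close>;
  so \<open>f\<close> increases across every dyadic subinterval of the edge, hence strictly on \<open>[0, 1]\<close>
  by continuity. Conversely, on the cells \<open>F\<^sub>2\<^sup>n(K)\<close> shrinking to \<open>p\<^sub>2\<close> the corner values
  decompose along the eigenvectors of \<open>A\<^sub>2\<close> with eigenvalues \<open>3/5\<close> and \<open>1/5\<close>; the slower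
  component, \<open>\<alpha> + \<beta> - 2\<gamma>\<close>, dominates, and monotonicity near \<open>p\<^sub>2\<close> forces it to be
  \<open>\<le> 0\<close>. Symmetrically \<open>A\<^sub>1\<close> near \<open>p\<^sub>1\<close> gives \<open>2\<beta> - \<gamma> \<le> \<alpha>\<close>. The second statement follows by
  applying the first to \<open>f\<close> and \<open>-f\<close>: equal corner values would make \<open>f\<close> constant.
\<close>

lemma closure_image_eq_image_closure:
  fixes f :: "'a::topological_space \<Rightarrow> 'b::t2_space"
  assumes "compact (closure S)" "continuous_on (closure S) f"
  shows "closure (f ` S) = f ` closure S"
proof
  have "closed (f ` closure S)"
    using compact_continuous_image[OF assms(2,1)] by (rule compact_imp_closed)
  then show "closure (f ` S) \<subseteq> f ` closure S"
    by (intro closure_minimal image_mono closure_subset)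
  show "f ` closure S \<subseteq> closure (f ` S)"
    using assms(2) by (rule continuous_image_closure_subset) simp
qed

lemma fixpoint_mem_if_halving_invariant:
  fixes p :: "'a::{real_normed_field, heine_borel}"
  assumes "closed S" "S \<noteq> {}" "\<And>x. x \<in> S \<Longrightarrow> (x + p) / 2 \<in> S"
  shows "p \<in> S"
proof -
  obtain x where "x \<in> S" and nearest: "\<And>y. y \<in> S \<Longrightarrow> dist p x \<le> dist p y"
    using distance_attains_inf[OF assms(1,2)] by blast
  have "dist p x \<le> dist p ((x + p) / 2)"
    using nearest assms(3) \<open>x \<in> S\<close> by blast
  also have "\<dots> = dist p x / 2"
    by (simp add: dist_norm norm_minus_commute field_simps)
  finally have "p = x" by simp
  with \<open>x \<in> S\<close> show ?thesis by simp
qed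

definition dyadic_floor :: "nat \<Rightarrow> real \<Rightarrow> real" where
  "dyadic_floor n t = real (nat \<lfloor>t * 2 ^ n\<rfloor>) / 2 ^ n"

lemma dyadic_floor_nonneg: "0 \<le> dyadic_floor n t"
  by (simp add: dyadic_floor_def)

lemma dyadic_floor_numerator_le: "(t::real) \<le> 1 \<Longrightarrow> nat \<lfloor>t * 2 ^ n\<rfloor> \<le> 2 ^ n"
proof -
  assume "t \<le> 1"
  then have "\<lfloor>t * 2 ^ n\<rfloor> \<le> \<lfloor>(2::real) ^ n\<rfloor>"
    by (intro floor_mono) simp
  then show ?thesis
    by (simp add: nat_le_iff)
qed

lemma dyadic_floor_bounds:
  assumes "0 \<le> t"
  shows "dyadic_floor n t \<le> t" "t - 1 / 2 ^ n < dyadic_floor n t"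
proof -
  define m where "m = real (nat \<lfloor>t * 2 ^ n\<rfloor>)"
  have "m = of_int \<lfloor>t * 2 ^ n\<rfloor>"
    using assms by (simp add: m_def)
  then have m: "m \<le> t * 2 ^ n" "t * 2 ^ n < m + 1"
    by linarith+
  have floor_eq: "dyadic_floor n t = m / 2 ^ n"
    by (simp add: dyadic_floor_def m_def)
  show "dyadic_floor n t \<le> t"
    unfolding floor_eq using m(1) by (simp add: field_simps)
  have "t - 1 / 2 ^ n = (t * 2 ^ n - 1) / 2 ^ n"
    by (simp add: field_simps)
  also have "\<dots> < dyadic_floor n t"
    unfolding floor_eq using m(2) by (intro divide_strict_right_mono) simp_all
  finally show "t - 1 / 2 ^ n < dyadic_floor n t" .
qed

lemma tendsto_dyadic_floor: "0 \<le> t \<Longrightarrow> (\<lambda>n. dyadic_floor n t) \<longlonglongrightarrow> t"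
proof (rule tendsto_sandwich[of "\<lambda>n. t - 1 / 2 ^ n" _ _ "\<lambda>n. t"])
  assume "0 \<le> t"
  then show "\<forall>\<^sub>F n in sequentially. t - 1 / 2 ^ n \<le> dyadic_floor n t"
    and "\<forall>\<^sub>F n in sequentially. dyadic_floor n t \<le> t"
    using dyadic_floor_bounds by (auto intro!: always_eventually less_imp_le)
  have "(\<lambda>n. (1/2::real) ^ n) \<longlonglongrightarrow> 0"
    by (rule LIMSEQ_power_zero) simp
  from tendsto_diff[OF tendsto_const[of t] this]
  show "(\<lambda>n. t - 1 / 2 ^ n) \<longlonglongrightarrow> t"
    by (simp add: power_one_over)
qed simp

lemma dyadic_interval_between:
  fixes s u :: real
  assumes "0 \<le> s" "s < u" "u \<le> 1"
  obtains n k where "k < 2 ^ n" "s \<le> real k / 2 ^ n" "real (Suc k) / 2 ^ n \<le> u"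
proof -
  obtain n where n: "(1/2) ^ n < (u - s) / 2"
    using real_arch_pow_inv[of "(u - s) / 2" "1/2"] assms(2) by auto
  define k where "k = nat \<lceil>s * 2 ^ n\<rceil>"
  have "real k = of_int \<lceil>s * 2 ^ n\<rceil>"
    using assms(1) by (simp add: k_def)
  then have k: "s * 2 ^ n \<le> real k" "real k < s * 2 ^ n + 1"
    by linarith+
  have "2 / 2 ^ n < u - s"
    using n by (simp add: power_one_over field_simps)
  then have "real (Suc k) < u * 2 ^ n"
    using k by (simp add: field_simps)
  also have "\<dots> \<le> 2 ^ n"
    using assms(3) by simp
  finally have "real (Suc k) < real (2 ^ n)"
    by simp
  then have "k < 2 ^ n"
    by (simp only: of_nat_less_iff)
  moreover have "s \<le> real k / 2 ^ n" "real (Suc k) / 2 ^ n \<le> u"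
    using k \<open>real (Suc k) < u * 2 ^ n\<close> by (simp_all add: field_simps)
  ultimately show ?thesis
    using that by blast
qed

lemma mono_on_unit_interval_if_dyadic_mono:
  fixes g :: "real \<Rightarrow> real"
  assumes cont: "continuous_on {0..1} g"
    and dyadic: "\<And>n j k. j \<le> k \<Longrightarrow> k \<le> 2 ^ n \<Longrightarrow> g (real j / 2 ^ n) \<le> g (real k / 2 ^ n)"
  shows "mono_on {0..1} g"
proof (rule mono_onI)
  fix s u :: real assume "s \<in> {0..1}" "u \<in> {0..1}" "s \<le> u"
  have lim: "(\<lambda>n. g (dyadic_floor n t)) \<longlonglongrightarrow> g t" if "t \<in> {0..1}" for t
  proof (rule continuous_on_tendsto_compose[OF cont tendsto_dyadic_floor])
    have "dyadic_floor n t \<in> {0..1}" for n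
      using that dyadic_floor_bounds(1)[of t n] dyadic_floor_nonneg[of n t] by auto
    then show "\<forall>\<^sub>F n in sequentially. dyadic_floor n t \<in> {0..1}"
      by simp
  qed (use that in auto)
  have "g (dyadic_floor n s) \<le> g (dyadic_floor n u)" for n
  proof -
    have "nat \<lfloor>s * 2 ^ n\<rfloor> \<le> nat \<lfloor>u * 2 ^ n\<rfloor>"
      using \<open>s \<le> u\<close> by (intro nat_mono floor_mono) simp
    moreover have "nat \<lfloor>u * 2 ^ n\<rfloor> \<le> 2 ^ n"
      using \<open>u \<in> {0..1}\<close> by (intro dyadic_floor_numerator_le) simp
    ultimately show ?thesis
      unfolding dyadic_floor_def by (rule dyadic)
  qed
  then show "g s \<le> g u"
    using LIMSEQ_le[OF lim lim] \<open>s \<in> {0..1}\<close> \<open>u \<in> {0..1}\<close> by blast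
qed

lemma strict_mono_on_unit_interval_if_dyadic_steps:
  fixes g :: "real \<Rightarrow> real"
  assumes cont: "continuous_on {0..1} g"
    and step: "\<And>n k. k < 2 ^ n \<Longrightarrow> g (real k / 2 ^ n) < g (real (Suc k) / 2 ^ n)"
  shows "strict_mono_on {0..1} g"
proof (rule strict_mono_onI)
  have "g (real j / 2 ^ n) \<le> g (real k / 2 ^ n)" if "j \<le> k" "k \<le> 2 ^ n" for n j k
    using that
  proof (induction k)
    case (Suc k)
    then show ?case
      using step[of k n] by (cases "j = Suc k") fastforce+
  qed simp
  then have mono: "mono_on {0..1} g"
    using cont by (rule mono_on_unit_interval_if_dyadic_mono[rotated])
  fix s u :: real assume "s \<in> {0..1}" "u \<in> {0..1}" "s < u"
  then obtain n k where k: "k < 2 ^ n" "s \<le> real k / 2 ^ n" "real (Suc k) / 2 ^ n \<le> u"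
    by (auto elim: dyadic_interval_between)
  have "real k / 2 ^ n \<le> real (Suc k) / 2 ^ n"
    by (simp add: divide_right_mono)
  then have mem: "real k / 2 ^ n \<in> {0..1}" "real (Suc k) / 2 ^ n \<in> {0..1}"
    using k \<open>s \<in> {0..1}\<close> \<open>u \<in> {0..1}\<close> unfolding atLeastAtMost_iff by linarith+
  have "g s \<le> g (real k / 2 ^ n)"
    using k mem \<open>s \<in> {0..1}\<close> by (intro mono_onD[OF mono])
  also have "\<dots> < g (real (Suc k) / 2 ^ n)"
    using step[OF k(1)] .
  also have "\<dots> \<le> g u"
    using k mem \<open>u \<in> {0..1}\<close> by (intro mono_onD[OF mono])
  finally show "g s < g u" .
qed

lemma nonpos_if_dominated_by_faster_decay:
  fixes q r x y :: real
  assumes "0 < r" "r < q" "\<And>n. q ^ n * x < r ^ n * y"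
  shows "x \<le> 0"
proof (rule LIMSEQ_le_const)
  have "(\<lambda>n. (r / q) ^ n) \<longlonglongrightarrow> 0"
    using assms(1,2) by (intro LIMSEQ_power_zero) simp
  then show "(\<lambda>n. (r / q) ^ n * y) \<longlonglongrightarrow> 0"
    by (rule tendsto_mult_left_zero)
  have "x \<le> (r / q) ^ n * y" for n
    using assms(3)[of n] assms(1,2) by (simp add: power_divide field_simps less_imp_le)
  then show "\<exists>N. \<forall>n\<ge>N. x \<le> (r / q) ^ n * y"
    by blast
qed

section \<open>The contractions and their compositions\<close>

lemma SG_p_simps [simp]:
  "SG_p 0 = Complex (1/2) (sqrt 3 / 2)" "SG_p 1 = 0" "SG_p (Suc 0) = 0" "SG_p 2 = 1"
  by (simp_all add: SG_p_def)

lemma SG_Fw_Nil [simp]: "SG_Fw [] = id"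
  by (simp add: SG_Fw_def)

lemma SG_Fw_Cons [simp]: "SG_Fw (i # w) = SG_F i \<circ> SG_Fw w"
  by (simp add: SG_Fw_def)

lemma SG_Fw_snoc: "SG_Fw (w @ [i]) = SG_Fw w \<circ> SG_F i"
  by (induction w) auto

lemma SG_Fw_affine: "SG_Fw w x = SG_Fw w 0 + x / 2 ^ length w"
proof (induction w arbitrary: x)
  case (Cons i w)
  show ?case using Cons[of x] by (simp add: SG_F_def field_simps)
qed simp

lemma SG_Fw_diff: "SG_Fw w x - SG_Fw w y = (x - y) / 2 ^ length w"
  by (subst (1 2) SG_Fw_affine) (simp add: diff_divide_distrib)

lemma dist_SG_Fw: "dist (SG_Fw w x) (SG_Fw w y) = dist x y / 2 ^ length w"
  by (simp add: dist_norm SG_Fw_diff norm_divide norm_power)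

lemma SG_Fw_midpoint: "SG_Fw w ((x + y) / 2) = (SG_Fw w x + SG_Fw w y) / 2"
  by (subst (1 2 3) SG_Fw_affine) (simp add: field_simps)

lemma SG_Fw_snoc_vertex:
  "SG_Fw (w @ [i]) (SG_p j) = (SG_Fw w (SG_p i) + SG_Fw w (SG_p j)) / 2"
  by (simp add: SG_Fw_snoc SG_F_def SG_Fw_midpoint add.commute)

lemma SG_F_fixpoint: "SG_F i (SG_p i) = SG_p i"
  by (simp add: SG_F_def)

lemma SG_Fw_replicate_vertex: "SG_Fw (replicate n i) (SG_p i) = SG_p i"
  by (induction n) (simp_all add: SG_F_fixpoint)

lemma SG_Fw_replicate: "SG_Fw (replicate n i) x = SG_p i + (x - SG_p i) / 2 ^ n"
  using SG_Fw_diff[of "replicate n i" x "SG_p i"]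
  by (simp add: SG_Fw_replicate_vertex diff_eq_eq add.commute)

lemma SG_edge_eq: "SG_edge f = (\<lambda>t. f (complex_of_real t))"
  by (simp add: SG_edge_def fun_eq_iff)

section \<open>The gasket as the closure of its vertex set\<close>

definition SG_hutchinson :: "complex set \<Rightarrow> complex set" where
  "SG_hutchinson S = (\<Union>i\<in>{0,1,2}. SG_F i ` S)"

definition SG_vertices :: "complex set" where
  "SG_vertices = {SG_Fw w (SG_p j) | w j. set w \<subseteq> {0,1,2} \<and> j \<in> {0,1,2}}"

lemma SG_verticesI: "set w \<subseteq> {0,1,2} \<Longrightarrow> j \<in> {0,1,2} \<Longrightarrow> SG_Fw w (SG_p j) \<in> SG_vertices"
  unfolding SG_vertices_def by blast

lemma SG_verticesE:
  assumes "x \<in> SG_vertices"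
  obtains w j where "set w \<subseteq> {0,1,2}" "j \<in> {0,1,2}" "x = SG_Fw w (SG_p j)"
  using assms unfolding SG_vertices_def by blast

lemma norm_SG_p_le: "norm (SG_p j) \<le> 1"
proof -
  have "cmod (Complex (1/2) (sqrt 3 / 2)) = 1"
    by (simp add: cmod_def power_divide)
  then show ?thesis by (auto simp: SG_p_def)
qed

lemma norm_SG_Fw_le: "norm x \<le> 1 \<Longrightarrow> norm (SG_Fw w x) \<le> 1"
proof (induction w)
  case (Cons i w)
  have "norm (SG_Fw w x + SG_p i) \<le> norm (SG_Fw w x) + norm (SG_p i)"
    by (rule norm_triangle_ineq)
  also have "\<dots> \<le> 2"
    using Cons norm_SG_p_le[of i] by simp
  finally show ?case by (simp add: SG_F_def norm_divide)
qed simp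

lemma bounded_SG_vertices: "bounded SG_vertices"
  unfolding bounded_iff SG_vertices_def by (auto intro!: exI[of _ 1] norm_SG_Fw_le norm_SG_p_le)

lemma SG_hutchinson_vertices: "SG_hutchinson SG_vertices = SG_vertices"
proof
  show "SG_hutchinson SG_vertices \<subseteq> SG_vertices"
  proof
    fix x assume "x \<in> SG_hutchinson SG_vertices"
    then obtain i y where i: "i \<in> {0,1,2}" and "y \<in> SG_vertices" and x: "x = SG_F i y"
      unfolding SG_hutchinson_def by blast
    obtain w j where "set w \<subseteq> {0,1,2}" "j \<in> {0,1,2}" and "y = SG_Fw w (SG_p j)"
      using \<open>y \<in> SG_vertices\<close> by (rule SG_verticesE)
    then show "x \<in> SG_vertices" using i x SG_verticesI[of "i # w" j] by simp
  qed
  show "SG_vertices \<subseteq> SG_hutchinson SG_vertices"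
  proof
    fix x assume "x \<in> SG_vertices"
    then obtain w j where w: "set w \<subseteq> {0,1,2}" and j: "j \<in> {0,1,2}"
      and x: "x = SG_Fw w (SG_p j)"
      by (rule SG_verticesE)
    show "x \<in> SG_hutchinson SG_vertices"
    proof (cases w)
      case Nil
      have "SG_p j \<in> SG_vertices"
        using SG_verticesI[of "[]" j] j by simp
      moreover have "x = SG_F j (SG_p j)"
        by (simp add: x Nil SG_F_fixpoint)
      ultimately show ?thesis
        unfolding SG_hutchinson_def using j by blast
    next
      case (Cons i v)
      have "SG_Fw v (SG_p j) \<in> SG_vertices"
        using SG_verticesI[of v j] w j Cons by simp
      moreover have "x = SG_F i (SG_Fw v (SG_p j))" and "i \<in> {0,1,2}"
        using x w Cons by auto
      ultimately show ?thesis
        unfolding SG_hutchinson_def by blast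
    qed
  qed
qed

lemma compact_closure_SG_vertices: "compact (closure SG_vertices)"
  using bounded_SG_vertices by (simp add: compact_closure)

lemma continuous_on_SG_F: "continuous_on S (SG_F i)"
  unfolding SG_F_def by (intro continuous_intros) simp

lemma SG_hutchinson_closure_vertices:
  "SG_hutchinson (closure SG_vertices) = closure SG_vertices"
proof -
  have "SG_F i ` closure SG_vertices = closure (SG_F i ` SG_vertices)" for i
    by (rule closure_image_eq_image_closure[symmetric,
          OF compact_closure_SG_vertices continuous_on_SG_F])
  then have "SG_hutchinson (closure SG_vertices) = closure (SG_hutchinson SG_vertices)"
    unfolding SG_hutchinson_def by (simp only: UN_insert UN_empty closure_Un closure_empty)
  then show ?thesis by (simp add: SG_hutchinson_vertices)
qed

lemma SG_vertices_subset_invariant: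
  assumes "closed K" "K \<noteq> {}" "SG_hutchinson K \<subseteq> K"
  shows "SG_vertices \<subseteq> K"
proof -
  have F_K: "SG_F i x \<in> K" if "i \<in> {0,1,2}" "x \<in> K" for i x
    using assms(3) that unfolding SG_hutchinson_def by blast
  have "SG_p j \<in> K" if "j \<in> {0,1,2}" for j
  proof (rule fixpoint_mem_if_halving_invariant[OF assms(1,2)])
    show "(x + SG_p j) / 2 \<in> K" if "x \<in> K" for x
      using F_K[OF \<open>j \<in> {0,1,2}\<close> that] by (simp add: SG_F_def)
  qed
  then have Fw_K: "SG_Fw w (SG_p j) \<in> K" if "set w \<subseteq> {0,1,2}" "j \<in> {0,1,2}" for w j
    using that by (induction w) (simp_all add: F_K)
  show ?thesis
  proof
    fix x assume "x \<in> SG_vertices"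
    then show "x \<in> K" by (rule SG_verticesE) (simp add: Fw_K)
  qed
qed

lemma invariant_cell_decomposition:
  assumes "K \<subseteq> SG_hutchinson K" "x \<in> K"
  shows "\<exists>w z. length w = n \<and> set w \<subseteq> {0,1,2} \<and> z \<in> K \<and> x = SG_Fw w z"
  using assms(2)
proof (induction n arbitrary: x)
  case 0
  then show ?case by (intro exI[of _ "[]"]) simp
next
  case (Suc n)
  obtain i y where i: "i \<in> {0,1,2}" and "y \<in> K" and x: "x = SG_F i y"
    using assms(1) Suc.prems unfolding SG_hutchinson_def by blast
  obtain w z where "length w = n" "set w \<subseteq> {0,1,2}" "z \<in> K" "y = SG_Fw w z"
    using Suc.IH[OF \<open>y \<in> K\<close>] by blast
  with i x show ?case
    by (intro exI[of _ "i # w"] exI[of _ z]) simp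
qed

lemma invariant_subset_closure_vertices:
  assumes "bounded K" "K \<subseteq> SG_hutchinson K"
  shows "K \<subseteq> closure SG_vertices"
proof
  fix x assume "x \<in> K"
  obtain M where M: "\<And>z. z \<in> K \<Longrightarrow> norm z \<le> M"
    using assms(1) unfolding bounded_iff by blast
  have "M \<ge> 0"
    using M[OF \<open>x \<in> K\<close>] norm_ge_zero[of x] by linarith
  show "x \<in> closure SG_vertices"
    unfolding closure_approachable
  proof (intro allI impI)
    fix e :: real assume "e > 0"
    then obtain n where n: "(1/2) ^ n < e / (M + 1)"
      using real_arch_pow_inv[of "e / (M + 1)" "1/2"] \<open>M \<ge> 0\<close> by auto
    obtain w z where w: "length w = n" "set w \<subseteq> {0,1,2}" and "z \<in> K" and x: "x = SG_Fw w z"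
      using invariant_cell_decomposition[OF assms(2) \<open>x \<in> K\<close>] by blast
    have "dist (SG_p 0) z \<le> M + 1"
      using norm_triangle_ineq4[of "SG_p 0" z] norm_SG_p_le[of 0] M[OF \<open>z \<in> K\<close>]
      by (simp add: dist_norm)
    then have "dist (SG_Fw w (SG_p 0)) x \<le> (M + 1) * (1/2) ^ n"
      by (simp add: x w dist_SG_Fw power_divide divide_right_mono)
    also have "\<dots> < e"
      using n \<open>M \<ge> 0\<close> by (simp add: pos_less_divide_eq mult.commute)
    finally show "\<exists>y\<in>SG_vertices. dist y x < e"
      using SG_verticesI[of w 0] w by auto
  qed
qed

lemma SG_K_eq_closure_vertices: "SG_K = closure SG_vertices"
proof -
  have "SG_K = (THE K. compact K \<and> K \<noteq> {} \<and> K = SG_hutchinson K)"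
    by (simp add: SG_K_def SG_hutchinson_def)
  also have "\<dots> = closure SG_vertices"
  proof (rule the_equality)
    have "SG_p 0 \<in> SG_vertices"
      using SG_verticesI[of "[]" 0] by simp
    then show "compact (closure SG_vertices) \<and> closure SG_vertices \<noteq> {} \<and>
        closure SG_vertices = SG_hutchinson (closure SG_vertices)"
      using compact_closure_SG_vertices SG_hutchinson_closure_vertices closure_subset by auto
  next
    fix K assume K: "compact K \<and> K \<noteq> {} \<and> K = SG_hutchinson K"
    then have "closure SG_vertices \<subseteq> K"
      by (intro closure_minimal SG_vertices_subset_invariant) (auto intro: compact_imp_closed)
    moreover have "K \<subseteq> closure SG_vertices"
      using K by (intro invariant_subset_closure_vertices) (auto intro: compact_imp_bounded)
    ultimately show "K = closure SG_vertices" by blast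
  qed
  finally show ?thesis .
qed

lemma dyadic_cell_word:
  "k < 2 ^ n \<Longrightarrow> \<exists>w. set w \<subseteq> {1,2} \<and> length w = n \<and> SG_Fw w 0 = of_nat k / 2 ^ n"
proof (induction n arbitrary: k)
  case 0
  then show ?case by (intro exI[of _ "[]"]) simp
next
  case (Suc n)
  show ?case
  proof (cases "k < 2 ^ n")
    case True
    then obtain w where w: "set w \<subseteq> {1,2}" "length w = n" "SG_Fw w 0 = of_nat k / 2 ^ n"
      using Suc.IH by blast
    then have "SG_Fw (1 # w) 0 = of_nat k / 2 ^ Suc n"
      by (simp add: SG_F_def)
    with w show ?thesis
      by (intro exI[of _ "1 # w"]) simp
  next
    case False
    with Suc.prems have "k - 2 ^ n < 2 ^ n"
      by simp
    then obtain w where w: "set w \<subseteq> {1,2}" "length w = n"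
        "SG_Fw w 0 = of_nat (k - 2 ^ n) / 2 ^ n"
      using Suc.IH by blast
    then have "SG_Fw (2 # w) 0 = of_nat k / 2 ^ Suc n"
      using False by (simp add: SG_F_def of_nat_diff field_simps)
    with w show ?thesis
      by (intro exI[of _ "2 # w"]) simp
  qed
qed

lemma dyadic_mem_SG_vertices:
  assumes "k \<le> 2 ^ n"
  shows "complex_of_real (real k / 2 ^ n) \<in> SG_vertices"
proof (cases "k < 2 ^ n")
  case True
  then obtain w where w: "set w \<subseteq> {1,2}" "SG_Fw w 0 = of_nat k / 2 ^ n"
    using dyadic_cell_word by blast
  then have "SG_Fw w (SG_p 1) \<in> SG_vertices"
    by (intro SG_verticesI) auto
  with w(2) show ?thesis
    by simp
next
  case False
  with assms have "k = 2 ^ n"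
    by simp
  moreover have "SG_Fw [] (SG_p 2) \<in> SG_vertices"
    by (intro SG_verticesI) auto
  ultimately show ?thesis
    by simp
qed

lemma unit_interval_subset_SG_K: "t \<in> {0..1} \<Longrightarrow> complex_of_real t \<in> SG_K"
  unfolding SG_K_eq_closure_vertices closure_sequential
proof (intro exI conjI allI)
  assume t: "t \<in> {0..1}"
  show "complex_of_real (dyadic_floor n t) \<in> SG_vertices" for n
    unfolding dyadic_floor_def using t dyadic_floor_numerator_le[of t n]
    by (intro dyadic_mem_SG_vertices) auto
  show "(\<lambda>n. complex_of_real (dyadic_floor n t)) \<longlonglongrightarrow> complex_of_real t"
    using t by (intro tendsto_of_real tendsto_dyadic_floor) simp
qed

section \<open>Harmonic extension\<close>

lemma SG_harmonic_snoc:
  assumes "SG_harmonic f" "set w \<subseteq> {0,1,2}" "{i,j,k} = {0,1,2::nat}"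
  shows "f (SG_Fw (w @ [i]) (SG_p j)) =
    (2 * f (SG_Fw w (SG_p i)) + 2 * f (SG_Fw w (SG_p j)) + f (SG_Fw w (SG_p k))) / 5"
  using assms unfolding SG_harmonic_def SG_Fw_snoc_vertex by blast

definition SG_cell_values :: "(complex \<Rightarrow> real) \<Rightarrow> nat list \<Rightarrow> real \<times> real \<times> real" where
  "SG_cell_values f w = (f (SG_Fw w (SG_p 0)), f (SG_Fw w (SG_p 1)), f (SG_Fw w (SG_p 2)))"

(* Kigami's harmonic extension matrices A_0, A_1, A_2, read off from the midpoint rule. *)
definition SG_harmonic_ext :: "nat \<Rightarrow> real \<times> real \<times> real \<Rightarrow> real \<times> real \<times> real" where
  "SG_harmonic_ext i = (\<lambda>(a, b, c).
     if i = 0 then (a, (2*a + 2*b + c) / 5, (2*a + b + 2*c) / 5)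
     else if i = 1 then ((2*a + 2*b + c) / 5, b, (a + 2*b + 2*c) / 5)
     else ((2*a + b + 2*c) / 5, (a + 2*b + 2*c) / 5, c))"

lemma SG_cell_values_snoc:
  assumes "SG_harmonic f" "set w \<subseteq> {0,1,2}" "i \<in> {0,1,2}"
  shows "SG_cell_values f (w @ [i]) = SG_harmonic_ext i (SG_cell_values f w)"
proof -
  have fixed: "SG_Fw (w @ [i]) (SG_p i) = SG_Fw w (SG_p i)"
    by (simp add: SG_Fw_snoc SG_F_fixpoint)
  note mid = SG_harmonic_snoc[OF assms(1,2)]
  from assms(3) consider "i = 0" | "i = 1" | "i = 2"
    by blast
  then show ?thesis
  proof cases
    case 1
    then show ?thesis
      using fixed mid[of 0 1 2] mid[of 0 2 1]
      by (simp add: SG_cell_values_def SG_harmonic_ext_def insert_commute)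
  next
    case 2
    then show ?thesis
      using fixed mid[of 1 0 2] mid[of 1 2 0]
      by (simp add: SG_cell_values_def SG_harmonic_ext_def insert_commute)
  next
    case 3
    then show ?thesis
      using fixed mid[of 2 0 1] mid[of 2 1 0]
      by (simp add: SG_cell_values_def SG_harmonic_ext_def insert_commute)
  qed
qed

lemma SG_cell_values_invariant:
  assumes "SG_harmonic f" "A \<subseteq> {0,1,2}" "set w \<subseteq> A"
    and "P (SG_cell_values f [])"
    and "\<And>i v. i \<in> A \<Longrightarrow> P v \<Longrightarrow> P (SG_harmonic_ext i v)"
  shows "P (SG_cell_values f w)"
  using assms(3)
proof (induction w rule: rev_induct)
  case (snoc i w)
  then have "P (SG_harmonic_ext i (SG_cell_values f w))"
    using assms(5) by simp
  moreover have "SG_cell_values f (w @ [i]) = SG_harmonic_ext i (SG_cell_values f w)"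
    using snoc.prems assms(2) by (intro SG_cell_values_snoc[OF assms(1)]) auto
  ultimately show ?case
    by simp
qed (use assms(4) in simp)

lemma SG_cell_values_replicate:
  assumes "SG_harmonic f" "i \<in> {0,1,2}"
  shows "SG_cell_values f (replicate n i) = (SG_harmonic_ext i ^^ n) (SG_cell_values f [])"
proof (induction n)
  case (Suc n)
  have "SG_cell_values f (replicate n i @ [i]) =
      SG_harmonic_ext i (SG_cell_values f (replicate n i))"
    using assms by (intro SG_cell_values_snoc) auto
  then show ?case
    by (simp add: Suc replicate_append_same)
qed simp

lemma SG_harmonic_ext_1_iterate:
  "(SG_harmonic_ext 1 ^^ n) (a, b, c) =
    (b + ((3/5) ^ n * (a + c - 2 * b) + (1/5) ^ n * (a - c)) / 2, b,
     b + ((3/5) ^ n * (a + c - 2 * b) - (1/5) ^ n * (a - c)) / 2)"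
  by (induction n) (simp_all add: SG_harmonic_ext_def field_simps)

lemma SG_harmonic_ext_2_iterate:
  "(SG_harmonic_ext 2 ^^ n) (a, b, c) =
    (c + ((3/5) ^ n * (a + b - 2 * c) + (1/5) ^ n * (a - b)) / 2,
     c + ((3/5) ^ n * (a + b - 2 * c) - (1/5) ^ n * (a - b)) / 2, c)"
  by (induction n) (simp_all add: SG_harmonic_ext_def field_simps)

lemma SG_harmonic_uminus: "SG_harmonic f \<Longrightarrow> SG_harmonic (\<lambda>x. - f x)"
  unfolding SG_harmonic_def by (auto intro: continuous_on_minus simp: field_simps)

lemma SG_harmonic_constant:
  assumes "SG_harmonic f" "SG_cell_values f [] = (c, c, c)"
  shows "\<forall>x\<in>SG_K. f x = c"
proof -
  have "SG_cell_values f w = (c, c, c)" if "set w \<subseteq> {0,1,2}" for w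
    using assms(1) _ that assms(2)
    by (rule SG_cell_values_invariant) (auto simp: SG_harmonic_ext_def)
  then have "f x = c" if "x \<in> SG_vertices" for x
    using that by (elim SG_verticesE) (auto simp: SG_cell_values_def)
  moreover have "continuous_on (closure SG_vertices) f"
    using assms(1) by (simp add: SG_harmonic_def SG_K_eq_closure_vertices)
  ultimately show ?thesis
    unfolding SG_K_eq_closure_vertices using continuous_constant_on_closure by blast
qed

section \<open>Monotonicity along the edge\<close>

definition increasing_edge_data :: "real \<times> real \<times> real \<Rightarrow> bool" where
  "increasing_edge_data = (\<lambda>(a, b, c). b < c \<and> 2 * b - c \<le> a \<and> a \<le> 2 * c - b)"

lemma continuous_on_SG_edge: "SG_harmonic f \<Longrightarrow> continuous_on {0..1} (SG_edge f)"
  unfolding SG_edge_eq SG_harmonic_def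
  by (rule continuous_on_compose2[of SG_K f]) (auto intro: continuous_intros unit_interval_subset_SG_K)

lemma increasing_edge_data_harmonic_ext:
  "i \<in> {1,2} \<Longrightarrow> increasing_edge_data v \<Longrightarrow> increasing_edge_data (SG_harmonic_ext i v)"
  by (cases v) (auto simp: increasing_edge_data_def SG_harmonic_ext_def field_simps)

lemma strict_mono_SG_edge_if_increasing_edge_data:
  assumes "SG_harmonic f" "increasing_edge_data (SG_cell_values f [])"
  shows "strict_mono_on {0..1} (SG_edge f)"
proof (rule strict_mono_on_unit_interval_if_dyadic_steps[OF continuous_on_SG_edge[OF assms(1)]])
  fix n k :: nat assume "k < 2 ^ n"
  then obtain w where w: "set w \<subseteq> {1,2}" "length w = n" "SG_Fw w 0 = of_nat k / 2 ^ n"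
    using dyadic_cell_word by blast
  have "increasing_edge_data (SG_cell_values f w)"
    using assms(1) _ w(1) assms(2) increasing_edge_data_harmonic_ext
    by (rule SG_cell_values_invariant) auto
  then have "f (SG_Fw w (SG_p 1)) < f (SG_Fw w (SG_p 2))"
    by (simp add: increasing_edge_data_def SG_cell_values_def)
  moreover have "SG_Fw w (SG_p 1) = complex_of_real (real k / 2 ^ n)"
    using w(3) by simp
  moreover have "SG_Fw w (SG_p 2) = complex_of_real (real (Suc k) / 2 ^ n)"
    using w(2,3) SG_Fw_affine[of w 1] by (simp add: add_divide_distrib)
  ultimately show "SG_edge f (real k / 2 ^ n) < SG_edge f (real (Suc k) / 2 ^ n)"
    by (simp add: SG_edge_eq)
qed

lemma SG_harmonic_value_near_p2:
  assumes "SG_harmonic f" "SG_cell_values f [] = (a, b, c)"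
  shows "f (complex_of_real (1 - 1 / 2 ^ n)) =
    c + ((3/5) ^ n * (a + b - 2 * c) - (1/5) ^ n * (a - b)) / 2"
proof -
  have "SG_Fw (replicate n 2) (SG_p 1) = complex_of_real (1 - 1 / 2 ^ n)"
    by (simp add: SG_Fw_replicate)
  then have "f (complex_of_real (1 - 1 / 2 ^ n)) = fst (snd (SG_cell_values f (replicate n 2)))"
    by (simp add: SG_cell_values_def)
  also have "\<dots> = c + ((3/5) ^ n * (a + b - 2 * c) - (1/5) ^ n * (a - b)) / 2"
    using SG_cell_values_replicate[OF assms(1), of 2 n]
    by (simp add: assms(2) SG_harmonic_ext_2_iterate)
  finally show ?thesis .
qed

lemma SG_harmonic_value_near_p1:
  assumes "SG_harmonic f" "SG_cell_values f [] = (a, b, c)"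
  shows "f (complex_of_real (1 / 2 ^ n)) =
    b + ((3/5) ^ n * (a + c - 2 * b) - (1/5) ^ n * (a - c)) / 2"
proof -
  have "SG_Fw (replicate n 1) (SG_p 2) = complex_of_real (1 / 2 ^ n)"
    by (simp add: SG_Fw_replicate)
  then have "f (complex_of_real (1 / 2 ^ n)) = snd (snd (SG_cell_values f (replicate n 1)))"
    by (simp add: SG_cell_values_def)
  also have "\<dots> = b + ((3/5) ^ n * (a + c - 2 * b) - (1/5) ^ n * (a - c)) / 2"
    using SG_cell_values_replicate[OF assms(1), of 1 n]
    by (simp add: assms(2) SG_harmonic_ext_1_iterate[unfolded One_nat_def])
  finally show ?thesis .
qed

lemma increasing_edge_data_if_strict_mono_SG_edge:
  assumes "SG_harmonic f" "strict_mono_on {0..1} (SG_edge f)"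
  shows "increasing_edge_data (SG_cell_values f [])"
proof -
  obtain a b c where abc: "SG_cell_values f [] = (a, b, c)"
    by (cases "SG_cell_values f []") auto
  then have b: "f 0 = b" and c: "f 1 = c"
    by (simp_all add: SG_cell_values_def)
  have edge: "f (complex_of_real s) < f (complex_of_real t)" if "0 \<le> s" "s < t" "t \<le> 1" for s t
    using strict_mono_onD[OF assms(2), of s t] that by (simp add: SG_edge_eq)
  have "b < c"
    using edge[of 0 1] b c by simp
  have "(3/5) ^ n * (a + b - 2 * c) < (1/5) ^ n * (a - b)" for n
    using edge[of "1 - 1 / 2 ^ n" 1] c SG_harmonic_value_near_p2[OF assms(1) abc, of n] by simp
  then have "a + b - 2 * c \<le> 0"
    by (rule nonpos_if_dominated_by_faster_decay[rotated 2]) simp_all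
  have "(3/5) ^ n * (2 * b - a - c) < (1/5) ^ n * (c - a)" for n
    using edge[of 0 "1 / 2 ^ n"] b SG_harmonic_value_near_p1[OF assms(1) abc, of n]
    by (simp add: algebra_simps)
  then have "2 * b - a - c \<le> 0"
    by (rule nonpos_if_dominated_by_faster_decay[rotated 2]) simp_all
  show ?thesis
    using \<open>b < c\<close> \<open>a + b - 2 * c \<le> 0\<close> \<open>2 * b - a - c \<le> 0\<close>
    by (simp add: abc increasing_edge_data_def)
qed

lemma strict_mono_SG_edge_iff:
  "SG_harmonic f \<Longrightarrow>
    strict_mono_on {0..1} (SG_edge f) \<longleftrightarrow> increasing_edge_data (SG_cell_values f [])"
  using strict_mono_SG_edge_if_increasing_edge_data increasing_edge_data_if_strict_mono_SG_edge
  by blast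

lemma increasing_edge_data_either_sign_iff:
  fixes a b c :: real
  assumes "\<not> (a = b \<and> b = c)"
  shows "increasing_edge_data (a, b, c) \<or> increasing_edge_data (- a, - b, - c) \<longleftrightarrow>
    (3 * b - (a + b + c)) * (3 * c - (a + b + c)) \<le> 0"
  using assms by (auto simp: increasing_edge_data_def mult_le_0_iff)

theorem theorem3:
  fixes f :: "complex \<Rightarrow> real" and \<alpha> \<beta> \<gamma> :: real
  assumes "SG_harmonic f"
    and "f (SG_p 0) = \<alpha>" and "f (SG_p 1) = \<beta>" and "f (SG_p 2) = \<gamma>"
  shows "(strict_mono_on {0..1} (SG_edge f) \<longleftrightarrow>
            \<beta> < \<gamma> \<and> 2 * \<beta> - \<gamma> \<le> \<alpha> \<and> \<alpha> \<le> 2 * \<gamma> - \<beta>)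
       \<and> ((\<not> (\<exists>c. \<forall>x\<in>SG_K. f x = c)) \<longrightarrow>
            ((strict_mono_on {0..1} (SG_edge f) \<or> strict_mono_on {0..1} (\<lambda>t. - SG_edge f t))
              \<longleftrightarrow> (3 * \<beta> - (\<alpha> + \<beta> + \<gamma>)) * (3 * \<gamma> - (\<alpha> + \<beta> + \<gamma>)) \<le> 0))"
proof -
  have boundary: "SG_cell_values f [] = (\<alpha>, \<beta>, \<gamma>)"
    using assms(2-4) by (simp add: SG_cell_values_def)
  have incr: "strict_mono_on {0..1} (SG_edge f) \<longleftrightarrow> increasing_edge_data (\<alpha>, \<beta>, \<gamma>)"
    using strict_mono_SG_edge_iff[OF assms(1)] boundary by simp
  have "SG_edge (\<lambda>x. - f x) = (\<lambda>t. - SG_edge f t)"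
    by (simp add: SG_edge_eq)
  then have decr: "strict_mono_on {0..1} (\<lambda>t. - SG_edge f t) \<longleftrightarrow>
      increasing_edge_data (- \<alpha>, - \<beta>, - \<gamma>)"
    using strict_mono_SG_edge_iff[OF SG_harmonic_uminus[OF assms(1)]] boundary
    by (simp add: SG_cell_values_def)
  have "\<not> (\<alpha> = \<beta> \<and> \<beta> = \<gamma>)" if "\<not> (\<exists>c. \<forall>x\<in>SG_K. f x = c)"
    using that SG_harmonic_constant[OF assms(1)] boundary by auto
  then show ?thesis
    using incr decr increasing_edge_data_either_sign_iff
    by (simp add: increasing_edge_data_def)
qed

end
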